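(* Let $(M,\mu)$ be a finite measure space, $\beta>1$, $f:M\to\mathbb R$ measurable and $E\subseteq M$ measurable with $0<\mu(E)<\mu(M)$. Define $$\tilde f(y)=\begin{cases}\operatorname{ess\,sup}_{z\in M\setminus E}|f(z)|, & y\in E,\\ f(y), & y\in M\setminus E.\end{cases}$$ Then $\tilde f^*(t)\ge f^*(t)$ for $\mu(E)\le t\le\mu(M)$, and $$\int_{M\setminus E}|\tilde f|^\beta\,d\mu=\int_{\mu(E)}^{\mu(M)}[\tilde f^*(t)]^\beta\,dt.$$
   Context: For measurable $f$ on $(M,\mu)$: $m(f,s)=\mu(\{|f|>s\})$ and $f^*(t)=\inf\{s\ge0:m(f,s)\le t\}$ is the nonincreasing rearrangement. *)

theory Defs
  imports "HOL-Probability.Probability"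
begin

definition distr_fun :: "'a measure \<Rightarrow> ('a \<Rightarrow> ereal) \<Rightarrow> ereal \<Rightarrow> ennreal" where
  "distr_fun M g s = emeasure M {x \<in> space M. \<bar>g x\<bar> > s}"

text \<open>Nonincreasing rearrangement g*(t) = inf { s >= 0 : m(g,s) <= t }
  (infimum in the extended reals; s = infinity is harmless and makes inf of the empty real set infinity).\<close>
definition rearr :: "'a measure \<Rightarrow> ('a \<Rightarrow> ereal) \<Rightarrow> real \<Rightarrow> ereal" where
  "rearr M g t = Inf {s::ereal. 0 \<le> s \<and> distr_fun M g s \<le> ennreal t}"

definition epowr :: "ereal \<Rightarrow> real \<Rightarrow> ennreal" where
  "epowr x p = (if x = \<infinity> then \<infinity> else ennreal (real_of_ereal x powr p))"

definition ftilde :: "'a measure \<Rightarrow> 'a set \<Rightarrow> ('a \<Rightarrow> real) \<Rightarrow> 'a \<Rightarrow> ereal" where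
  "ftilde M E f y = (if y \<in> E then esssup (restrict_space M (space M - E)) (\<lambda>z. ereal \<bar>f z\<bar>)
                     else ereal (f y))"

end

theory Submission
  imports Defs
begin

(*
  On E the function f~ is the constant S = ess sup of |f| over M - E; off E it is f, whose modulus
  exceeds S only on a null set. Hence, for s >= 0, the distribution function of f~ at s is
  mu(E) + mu{y in M - E. |f y| > s} if s < S and 0 otherwise. The distribution function of f is at
  most the larger of this value and mu(E), so for t >= mu(E) fewer levels s qualify in the infimum
  defining f~*(t) than in the one defining f*(t). Moreover {t in [mu(E), mu(M)]. f~*(t) > s} is the
  interval [mu(E), mu(E) + mu{y in M - E. |f~ y| > s}), so |f~| on M - E and f~* on [mu(E), mu(M)]
  are equimeasurable and therefore have the same integrals.
*)

lemma measure_eqI_greaterThan: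
  fixes M N :: "'a::{linorder_topology, second_countable_topology} measure"
  assumes sets: "sets M = sets borel" "sets N = sets borel"
    and total: "emeasure M UNIV = emeasure N UNIV" "emeasure M UNIV \<noteq> \<infinity>"
    and greater: "\<And>x. emeasure M {x<..} = emeasure N {x<..}"
  shows "M = N"
proof (rule measure_eqI_generator_eq_countable[where E = "insert UNIV (range greaterThan)"
      and \<Omega> = UNIV and A = "{UNIV}"])
  have "{a<..} \<inter> {b<..} = {max a b<..}" for a b :: 'a
    by auto
  then show "Int_stable (insert UNIV (range greaterThan :: 'a set set))"
    by (auto simp: Int_stable_def)
  have "sigma_sets UNIV (range greaterThan)
      = sigma_sets UNIV (insert UNIV (range greaterThan :: 'a set set))"
    by (rule sigma_sets_eqI) (auto intro: sigma_sets_top)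
  then show "sets M = sigma_sets UNIV (insert UNIV (range greaterThan))"
    "sets N = sigma_sets UNIV (insert UNIV (range greaterThan))"
    using sets by (simp_all add: borel_Ioi)
  show "emeasure M X = emeasure N X" if "X \<in> insert UNIV (range greaterThan)" for X
    using that total greater by auto
  show "emeasure M a \<noteq> \<infinity>" if "a \<in> {UNIV}" for a
    using that total by simp
qed auto

lemma emeasure_restrict_space_Collect:
  assumes "\<Omega> \<in> sets M"
  shows "emeasure (restrict_space M \<Omega>) {x \<in> space (restrict_space M \<Omega>). P x}
    = emeasure M {x \<in> \<Omega>. P x}"
  using assms sets.sets_into_space[OF assms]
  by (subst emeasure_restrict_space)
    (auto simp: space_restrict_space Int_absorb2 intro!: arg_cong[where f = "emeasure M"])

lemma nn_integral_eq_if_equimeasurable: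
  fixes u :: "'a \<Rightarrow> 'c::{linorder_topology, second_countable_topology}"
    and v :: "'b \<Rightarrow> 'c"
  assumes u [measurable]: "u \<in> borel_measurable N" and v [measurable]: "v \<in> borel_measurable K"
    and total: "emeasure N (space N) = emeasure K (space K)" "emeasure N (space N) \<noteq> \<infinity>"
    and level: "\<And>s. emeasure N {x \<in> space N. s < u x} = emeasure K {x \<in> space K. s < v x}"
    and [measurable]: "\<phi> \<in> borel_measurable borel"
  shows "(\<integral>\<^sup>+x. \<phi> (u x) \<partial>N) = (\<integral>\<^sup>+x. \<phi> (v x) \<partial>K)"
proof -
  have distr_UNIV: "emeasure (distr L borel w) UNIV = emeasure L (space L)"
    and distr_greater: "emeasure (distr L borel w) {s<..} = emeasure L {x \<in> space L. s < w x}"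
    if "w \<in> borel_measurable L" for w :: "'d \<Rightarrow> 'c" and L s
    using that by (simp_all add: emeasure_distr vimage_def Int_def conj_commute)
  have "distr N borel u = distr K borel v"
    by (rule measure_eqI_greaterThan)
      (use total(2) in \<open>simp_all add: distr_UNIV distr_greater level flip: total(1)\<close>)
  then show ?thesis
    using nn_integral_distr[OF u, of \<phi>] nn_integral_distr[OF v, of \<phi>] by simp
qed

lemma ereal_less_iff_less_plus_inverse:
  "ereal r < y \<longleftrightarrow> (\<exists>n::nat. ereal (r + 1 / Suc n) < y)"
proof
  assume "ereal r < y"
  then show "\<exists>n::nat. ereal (r + 1 / Suc n) < y"
  proof (cases y)
    case (real v)
    with \<open>ereal r < y\<close> have "0 < v - r" by simp
    then obtain n where "inverse (real (Suc n)) < v - r"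
      using reals_Archimedean by blast
    then show ?thesis using real by (auto simp: field_simps)
  qed auto
next
  assume "\<exists>n::nat. ereal (r + 1 / Suc n) < y"
  then obtain n :: nat where "ereal (r + 1 / Suc n) < y" ..
  moreover have "ereal r < ereal (r + 1 / Suc n)" by simp
  ultimately show "ereal r < y" by (rule less_trans[rotated])
qed

lemma rearr_nonneg: "0 \<le> rearr M g t"
  unfolding rearr_def by (rule Inf_greatest) auto

lemma distr_fun_antimono:
  assumes [measurable]: "g \<in> borel_measurable M" and "s \<le> s'"
  shows "distr_fun M g s' \<le> distr_fun M g s"
  unfolding distr_fun_def using assms(2)
  by (intro emeasure_mono) (auto dest: le_less_trans)

lemma distr_fun_right_continuous:
  assumes [measurable]: "g \<in> borel_measurable M"
  shows "distr_fun M g (ereal r) = (SUP n. distr_fun M g (ereal (r + 1 / Suc n)))"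
proof -
  define A where "A n = {x \<in> space M. ereal (r + 1 / Suc n) < \<bar>g x\<bar>}" for n :: nat
  have "incseq A"
  proof (rule incseq_SucI)
    fix n
    have "ereal (r + 1 / Suc (Suc n)) \<le> ereal (r + 1 / Suc n)"
      by (simp add: frac_le)
    then show "A n \<subseteq> A (Suc n)"
      unfolding A_def by (blast intro: le_less_trans)
  qed
  moreover have "(\<Union>n. A n) = {x \<in> space M. ereal r < \<bar>g x\<bar>}"
    unfolding A_def using ereal_less_iff_less_plus_inverse[of r] by blast
  moreover have "range A \<subseteq> sets M"
    unfolding A_def by auto
  ultimately show ?thesis
    using SUP_emeasure_incseq[of A M] unfolding distr_fun_def by (simp add: A_def)
qed

lemma less_rearr_iff:
  assumes g [measurable]: "g \<in> borel_measurable M" and "0 \<le> s"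
  shows "s < rearr M g t \<longleftrightarrow> ennreal t < distr_fun M g s"
proof
  assume less: "s < rearr M g t"
  show "ennreal t < distr_fun M g s"
  proof (rule ccontr)
    assume "\<not> ennreal t < distr_fun M g s"
    then have "rearr M g t \<le> s"
      unfolding rearr_def using \<open>0 \<le> s\<close> by (intro Inf_lower) (simp add: not_less)
    with less show False by simp
  qed
next
  assume t: "ennreal t < distr_fun M g s"
  have "distr_fun M g \<infinity> = 0"
    by (simp add: distr_fun_def)
  with t have "s \<noteq> \<infinity>"
    by auto
  then obtain r where r: "s = ereal r"
    using \<open>0 \<le> s\<close> by (cases s) auto
  have "ennreal t < (SUP n. distr_fun M g (ereal (r + 1 / Suc n)))"
    using t unfolding r distr_fun_right_continuous[OF g, of r] .
  then obtain n :: nat where n: "ennreal t < distr_fun M g (ereal (r + 1 / Suc n))"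
    by (auto simp: less_SUP_iff)
  have "s < ereal (r + 1 / Suc n)"
    using r by simp
  also have "ereal (r + 1 / Suc n) \<le> rearr M g t"
    unfolding rearr_def
  proof (rule Inf_greatest, rule ccontr)
    fix z assume z: "z \<in> {s. 0 \<le> s \<and> distr_fun M g s \<le> ennreal t}"
      and "\<not> ereal (r + 1 / Suc n) \<le> z"
    then have "distr_fun M g (ereal (r + 1 / Suc n)) \<le> distr_fun M g z"
      by (intro distr_fun_antimono[OF g]) auto
    with n z show False by auto
  qed
  finally show "s < rearr M g t" .
qed

lemma borel_measurable_rearr:
  assumes "g \<in> borel_measurable M"
  shows "rearr M g \<in> borel_measurable borel"
proof (rule borel_measurableI_greater)
  fix s :: ereal
  show "{t \<in> space borel. s < rearr M g t} \<in> sets borel"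
  proof (cases "s < 0")
    case True
    then have "{t \<in> space borel. s < rearr M g t} = space borel"
      using rearr_nonneg[of M g] by (auto dest: less_le_trans)
    then show ?thesis by simp
  next
    case False
    then have "{t \<in> space borel. s < rearr M g t} = {t \<in> space borel. ennreal t < distr_fun M g s}"
      using less_rearr_iff[OF assms, of s] by auto
    then show ?thesis by simp
  qed
qed

lemma rearr_le_rearrI:
  assumes "\<And>s. 0 \<le> s \<Longrightarrow> distr_fun M h s \<le> ennreal t \<Longrightarrow> distr_fun M g s \<le> ennreal t"
  shows "rearr M g t \<le> rearr M h t"
  unfolding rearr_def using assms by (intro Inf_superset_mono) auto

lemma borel_measurable_epowr [measurable]: "(\<lambda>x. epowr x p) \<in> borel_measurable borel"
  unfolding epowr_def by measurable

abbreviation ftilde_level :: "'a measure \<Rightarrow> 'a set \<Rightarrow> ('a \<Rightarrow> real) \<Rightarrow> ereal" where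
  "ftilde_level M E f \<equiv> esssup (restrict_space M (space M - E)) (\<lambda>z. ereal \<bar>f z\<bar>)"

lemma borel_measurable_ftilde [measurable]:
  assumes "f \<in> borel_measurable M" and "E \<in> sets M"
  shows "ftilde M E f \<in> borel_measurable M"
proof -
  have "ftilde M E f = (\<lambda>y. if y \<in> E then ftilde_level M E f else ereal (f y))"
    by (simp add: ftilde_def fun_eq_iff)
  also have "\<dots> \<in> borel_measurable M"
    using assms by (intro measurable_If_set) auto
  finally show ?thesis .
qed

lemma emeasure_above_ftilde_level:
  assumes [measurable]: "f \<in> borel_measurable M" "E \<in> sets M"
    and "\<bar>ftilde_level M E f\<bar> \<le> s"
  shows "emeasure M {x \<in> space M - E. s < ereal \<bar>f x\<bar>} = 0"
proof -
  have "ftilde_level M E f \<le> \<bar>ftilde_level M E f\<bar>"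
    by (cases "ftilde_level M E f") auto
  then have level_le: "ftilde_level M E f \<le> s"
    using assms(3) by (rule order.trans)
  have "AE x in restrict_space M (space M - E). ereal \<bar>f x\<bar> \<le> ftilde_level M E f"
    by (rule esssup_AE)
  then have "AE x in M. x \<in> space M - E \<longrightarrow> ereal \<bar>f x\<bar> \<le> ftilde_level M E f"
    by (subst (asm) AE_restrict_space_iff) auto
  then have "AE x in M. x \<notin> {x \<in> space M - E. s < ereal \<bar>f x\<bar>}"
    by eventually_elim (use level_le in auto)
  then show ?thesis
    by (subst (asm) AE_iff_measurable[OF _ refl]) auto
qed

lemma distr_fun_ftilde:
  assumes "E \<in> sets M"
  shows "distr_fun M (ftilde M E f) s =
    emeasure M ((if s < \<bar>ftilde_level M E f\<bar> then E else {}) \<union> {x \<in> space M - E. s < ereal \<bar>f x\<bar>})"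
  unfolding distr_fun_def ftilde_def using sets.sets_into_space[OF assms]
  by (intro arg_cong[where f = "emeasure M"]) auto

lemma distr_fun_le_ftilde:
  assumes [measurable]: "f \<in> borel_measurable M" "E \<in> sets M"
  shows "distr_fun M (\<lambda>x. ereal (f x)) s \<le> max (distr_fun M (ftilde M E f) s) (emeasure M E)"
proof (cases "s < \<bar>ftilde_level M E f\<bar>")
  case True
  have "distr_fun M (\<lambda>x. ereal (f x)) s \<le> distr_fun M (ftilde M E f) s"
    unfolding distr_fun_def using True by (intro emeasure_mono) (auto simp: ftilde_def)
  then show ?thesis
    by (rule max.coboundedI1)
next
  case False
  have "distr_fun M (\<lambda>x. ereal (f x)) s \<le> emeasure M (E \<union> {x \<in> space M - E. s < ereal \<bar>f x\<bar>})"
    unfolding distr_fun_def by (intro emeasure_mono) auto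
  also have "\<dots> \<le> emeasure M E + emeasure M {x \<in> space M - E. s < ereal \<bar>f x\<bar>}"
    by (intro emeasure_subadditive) auto
  also have "\<dots> = emeasure M E"
    using False emeasure_above_ftilde_level[of f M E s] by simp
  finally show ?thesis
    by (rule max.coboundedI2)
qed

lemma rearr_le_rearr_ftilde:
  assumes "finite_measure M" and "f \<in> borel_measurable M" "E \<in> sets M"
    and "measure M E \<le> t"
  shows "rearr M (\<lambda>x. ereal (f x)) t \<le> rearr M (ftilde M E f) t"
proof (rule rearr_le_rearrI)
  fix s assume "distr_fun M (ftilde M E f) s \<le> ennreal t"
  moreover have "emeasure M E \<le> ennreal t"
    using assms by (simp add: finite_measure.emeasure_eq_measure ennreal_leI)
  ultimately show "distr_fun M (\<lambda>x. ereal (f x)) s \<le> ennreal t"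
    using distr_fun_le_ftilde[OF assms(2,3), of s] by (meson max.boundedI order.trans)
qed

lemma greater_rearr_ftilde_eq:
  assumes "finite_measure M" and [measurable]: "f \<in> borel_measurable M" "E \<in> sets M"
    and "0 \<le> s"
  shows "{t \<in> {measure M E..measure M (space M)}. s < rearr M (ftilde M E f) t} =
    (if s < \<bar>ftilde_level M E f\<bar>
     then {measure M E..<measure M E + measure M {x \<in> space M - E. s < ereal \<bar>f x\<bar>}} else {})"
proof -
  interpret finite_measure M by fact
  define a c where "a = measure M E" and "c = measure M {x \<in> space M - E. s < ereal \<bar>f x\<bar>}"
  have union: "a + c = measure M (E \<union> {x \<in> space M - E. s < ereal \<bar>f x\<bar>})"
    unfolding a_def c_def by (rule finite_measure_Union[symmetric]) auto
  also have "\<dots> \<le> measure M (space M)"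
    by (rule bounded_measure)
  finally have "a + c \<le> measure M (space M)" .
  have "{t \<in> {a..measure M (space M)}. s < rearr M (ftilde M E f) t}
      = {t \<in> {a..measure M (space M)}. ennreal t < distr_fun M (ftilde M E f) s}"
    using \<open>0 \<le> s\<close> by (auto simp: less_rearr_iff)
  also have "\<dots> = (if s < \<bar>ftilde_level M E f\<bar> then {a..<a + c} else {})"
  proof (cases "s < \<bar>ftilde_level M E f\<bar>")
    case True
    then have "distr_fun M (ftilde M E f) s = ennreal (a + c)"
      by (simp add: distr_fun_ftilde emeasure_eq_measure union)
    moreover have "0 \<le> a"
      by (simp add: a_def)
    ultimately show ?thesis
      using True \<open>a + c \<le> measure M (space M)\<close> by (auto simp: ennreal_less_iff simp del: ennreal_plus)
  next
    case False
    with emeasure_above_ftilde_level[of f M E s] have "distr_fun M (ftilde M E f) s = 0"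
      by (simp add: distr_fun_ftilde)
    with False show ?thesis
      by simp
  qed
  finally show ?thesis
    by (simp only: a_def c_def)
qed

lemma emeasure_greater_rearr_ftilde:
  assumes "finite_measure M" and [measurable]: "f \<in> borel_measurable M" "E \<in> sets M"
  shows "emeasure lborel {t \<in> {measure M E..measure M (space M)}. s < rearr M (ftilde M E f) t}
    = emeasure M {x \<in> space M - E. s < \<bar>ftilde M E f x\<bar>}"
proof -
  interpret finite_measure M by fact
  have R: "{x \<in> space M - E. s < \<bar>ftilde M E f x\<bar>} = {x \<in> space M - E. s < ereal \<bar>f x\<bar>}"
    by (auto simp: ftilde_def)
  show ?thesis
  proof (cases "s < 0")
    case True
    then have "{t \<in> {measure M E..measure M (space M)}. s < rearr M (ftilde M E f) t}
        = {measure M E..measure M (space M)}"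
      by (auto intro: less_le_trans[OF _ rearr_nonneg])
    moreover from True have "{x \<in> space M - E. s < \<bar>ftilde M E f x\<bar>} = space M - E"
      by (auto intro: less_le_trans[OF _ abs_ereal_pos])
    moreover have "measure M (space M - E) = measure M (space M) - measure M E"
      by (rule finite_measure_Diff) (use sets.sets_into_space[OF assms(3)] in auto)
    moreover have "measure M E \<le> measure M (space M)"
      by (rule bounded_measure)
    ultimately show ?thesis
      by (simp add: emeasure_eq_measure)
  next
    case False
    then have "0 \<le> s"
      by simp
    show ?thesis
      unfolding greater_rearr_ftilde_eq[OF assms \<open>0 \<le> s\<close>] R
      using emeasure_above_ftilde_level[OF assms(2,3), of s] by (simp add: emeasure_eq_measure)
  qed
qed

lemma nn_integral_ftilde_eq_rearr:
  assumes "finite_measure M" and [measurable]: "f \<in> borel_measurable M" "E \<in> sets M"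
    and [measurable]: "\<phi> \<in> borel_measurable borel"
  shows "(\<integral>\<^sup>+ y \<in> space M - E. \<phi> \<bar>ftilde M E f y\<bar> \<partial>M)
    = (\<integral>\<^sup>+ t \<in> {measure M E..measure M (space M)}. \<phi> (rearr M (ftilde M E f) t) \<partial>lborel)"
proof -
  interpret finite_measure M by fact
  define F where "F = ftilde M E f"
  let ?\<Omega> = "space M - E" and ?I = "{measure M E..measure M (space M)}"
  have \<Omega>_sets: "?\<Omega> \<in> sets M"
    by simp
  have "(\<integral>\<^sup>+ y. \<phi> \<bar>F y\<bar> \<partial>restrict_space M ?\<Omega>)
      = (\<integral>\<^sup>+ t. \<phi> (rearr M F t) \<partial>restrict_space lborel ?I)"
  proof (rule nn_integral_eq_if_equimeasurable[where u = "\<lambda>y. \<bar>F y\<bar>" and v = "rearr M F"])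
    show "(\<lambda>y. \<bar>F y\<bar>) \<in> borel_measurable (restrict_space M ?\<Omega>)"
      unfolding F_def by (rule measurable_restrict_space1) measurable
    show "rearr M F \<in> borel_measurable (restrict_space lborel ?I)"
      unfolding F_def by (rule measurable_restrict_space1) (simp add: borel_measurable_rearr)
    show level: "emeasure (restrict_space M ?\<Omega>) {y \<in> space (restrict_space M ?\<Omega>). s < \<bar>F y\<bar>}
        = emeasure (restrict_space lborel ?I) {t \<in> space (restrict_space lborel ?I). s < rearr M F t}"
      for s
      using emeasure_greater_rearr_ftilde[OF assms(1-3), of s]
      by (simp only: F_def emeasure_restrict_space_Collect \<Omega>_sets sets_lborel atLeastAtMost_borel)
    show "emeasure (restrict_space M ?\<Omega>) (space (restrict_space M ?\<Omega>))
        = emeasure (restrict_space lborel ?I) (space (restrict_space lborel ?I))"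
    proof -
      have "{y \<in> space (restrict_space M ?\<Omega>). -1 < \<bar>F y\<bar>} = space (restrict_space M ?\<Omega>)"
        by (auto intro: less_le_trans[OF _ abs_ereal_pos])
      moreover have "{t \<in> space (restrict_space lborel ?I). -1 < rearr M F t}
          = space (restrict_space lborel ?I)"
        by (auto intro: less_le_trans[OF _ rearr_nonneg])
      ultimately show ?thesis
        using level[of "-1"] by simp
    qed
  qed (simp_all add: emeasure_restrict_space space_restrict_space)
  then show ?thesis
    by (simp add: F_def nn_integral_restrict_space)
qed

theorem lemma5:
  fixes M :: "'a measure" and f :: "'a \<Rightarrow> real" and E :: "'a set" and \<beta> :: real
  assumes "finite_measure M"
    and "\<beta> > 1"
    and "f \<in> borel_measurable M"
    and "E \<in> sets M"
    and "0 < measure M E" and "measure M E < measure M (space M)"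
  shows "(\<forall>t. measure M E \<le> t \<and> t \<le> measure M (space M) \<longrightarrow>
            rearr M (ftilde M E f) t \<ge> rearr M (\<lambda>x. ereal (f x)) t)
       \<and> (\<integral>\<^sup>+ y \<in> space M - E. epowr \<bar>ftilde M E f y\<bar> \<beta> \<partial>M)
         = (\<integral>\<^sup>+ t \<in> {measure M E..measure M (space M)}. epowr (rearr M (ftilde M E f) t) \<beta> \<partial>lborel)"
  using rearr_le_rearr_ftilde[OF assms(1,3,4)]
    nn_integral_ftilde_eq_rearr[OF assms(1,3,4) borel_measurable_epowr]
  by blast

end
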